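(* Let $M\geq 1$, $P=4M-3$, and let $x\in\ell(\mathbb{Z}_P)$ be nonzero with $x[p]=0$ for all $p=M,\ldots,4M-4$. Let $q\in\{0,\ldots,M-1\}$ be the largest index with $x[q]\neq0$. Then the largest index $p\in\{0,\ldots,2M-2\}$ with $\operatorname{CirAut}(x+Rx)[p]\neq0$ is $p=2q$.
   Context: $\ell(\mathbb{Z}_P)$ denotes the space of $P$-periodic functions $u\colon\mathbb{Z}\to\mathbb{C}$, with inner product $\langle u,v\rangle=\sum_{p\in\mathbb{Z}_P}u[p]\overline{v[p]}$. The translation operator is $(T^pu)[p']:=u[p'-p]$ and the reversal operator is $(Ru)[p]:=u[-p]$. The circular autocorrelation is $\operatorname{CirAut}(u)[p]:=\langle u,T^pu\rangle=\sum_{p'\in\mathbb{Z}_P}u[p']\overline{u[p'-p]}$. *)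

theory Defs
  imports Complex_Main
begin

text \<open>Elements of l(Z_P) are represented as functions int => complex that are P-periodic.\<close>

definition periodic :: "int \<Rightarrow> (int \<Rightarrow> complex) \<Rightarrow> bool" where
  "periodic P u \<longleftrightarrow> (\<forall>n. u (n + P) = u n)"

definition inner_P :: "int \<Rightarrow> (int \<Rightarrow> complex) \<Rightarrow> (int \<Rightarrow> complex) \<Rightarrow> complex" where
  "inner_P P u v = (\<Sum>p\<in>{0..<P}. u p * cnj (v p))"

definition transl :: "int \<Rightarrow> (int \<Rightarrow> complex) \<Rightarrow> int \<Rightarrow> complex" where
  "transl p u = (\<lambda>p'. u (p' - p))"

definition revop :: "(int \<Rightarrow> complex) \<Rightarrow> int \<Rightarrow> complex" where
  "revop u = (\<lambda>p. u (- p))"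

definition CirAut :: "int \<Rightarrow> (int \<Rightarrow> complex) \<Rightarrow> int \<Rightarrow> complex" where
  "CirAut P u p = inner_P P u (transl p u)"

end

theory Submission
  imports Defs
begin

text \<open>Since x vanishes on q < p < P, the symmetrization y = x + Rx is supported on the residues
  of the window [-q, q]. Hence a nonzero term y[n] conj(y[n - p]) of the autocorrelation forces
  p to be congruent to a difference a - b with a, b in the window, i.e. to a residue of
  [-2q, 2q]. For 2q < p \<le> 2M - 2 this is impossible because p - (a - b) lies strictly between
  0 and P = 4M - 3. For p = 2q the same size argument forces a = q, b = -q, leaving the single
  term y[q] conj(y[-q]) = |y[q]|^2, which is nonzero.\<close>

lemma periodic_shift_mult:
  assumes "periodic P x"
  shows "x (n + k * P) = x n"
proof (induction k rule: int_induct[where k = 0])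
  case (step1 i)
  have "x (n + (i + 1) * P) = x ((n + i * P) + P)" by (simp add: algebra_simps)
  then show ?case using assms step1 by (simp add: periodic_def)
next
  case (step2 i)
  have "x (n + i * P) = x ((n + (i - 1) * P) + P)" by (simp add: algebra_simps)
  then show ?case using assms step2 by (simp add: periodic_def)
qed simp

lemma periodic_mod:
  assumes "periodic P x"
  shows "x n = x (n mod P)"
  using periodic_shift_mult[OF assms, of "n mod P" "n div P"] by (simp add: mod_div_mult_eq)

lemma eq_if_mod_eq_abs_diff_less:
  fixes a b P :: int
  assumes "a mod P = b mod P" and "\<bar>a - b\<bar> < P"
  shows "a = b"
proof (rule ccontr)
  assume "a \<noteq> b"
  moreover have "P dvd a - b" using assms(1) by (simp add: mod_eq_dvd_iff)
  ultimately have "\<bar>P\<bar> \<le> \<bar>a - b\<bar>" by (intro dvd_imp_le_int) auto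
  then show False using assms(2) by simp
qed

lemma CirAut_eq_sum:
  "CirAut P u p = (\<Sum>n\<in>{0..<P}. u n * cnj (u (n - p)))"
  by (simp add: CirAut_def inner_P_def transl_def)

definition supported_in_window :: "int \<Rightarrow> int \<Rightarrow> (int \<Rightarrow> complex) \<Rightarrow> bool" where
  "supported_in_window P r u \<longleftrightarrow> (\<forall>n. u n \<noteq> 0 \<longrightarrow> (\<exists>a. \<bar>a\<bar> \<le> r \<and> n mod P = a mod P))"

lemma CirAut_term_nonzero_imp_mod_eq:
  fixes u :: "int \<Rightarrow> complex"
  assumes supp: "supported_in_window P r u"
    and "u n * cnj (u (n - p)) \<noteq> 0"
  obtains a b where "\<bar>a\<bar> \<le> r" "\<bar>b\<bar> \<le> r" "n mod P = a mod P" "p mod P = (a - b) mod P"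
proof -
  obtain a where a: "\<bar>a\<bar> \<le> r" "n mod P = a mod P" using supp assms(2) unfolding supported_in_window_def by fastforce
  obtain b where b: "\<bar>b\<bar> \<le> r" "(n - p) mod P = b mod P" using supp assms(2) unfolding supported_in_window_def by fastforce
  have "p mod P = (n - (n - p)) mod P" by (simp add: algebra_simps)
  also have "\<dots> = (a - b) mod P" using a(2) b(2) by (metis mod_diff_cong)
  finally show thesis by (rule that[OF a(1) b(1) a(2)])
qed

lemma CirAut_eq_0_if_window_support:
  fixes u :: "int \<Rightarrow> complex"
  assumes supp: "supported_in_window P r u"
    and far: "\<forall>d. \<bar>d\<bar> \<le> 2 * r \<longrightarrow> p mod P \<noteq> d mod P"
  shows "CirAut P u p = 0"
  unfolding CirAut_eq_sum
proof (intro sum.neutral ballI)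
  fix n
  show "u n * cnj (u (n - p)) = 0"
  proof (rule ccontr)
    assume "u n * cnj (u (n - p)) \<noteq> 0"
    then obtain a b where ab: "\<bar>a\<bar> \<le> r" "\<bar>b\<bar> \<le> r" "n mod P = a mod P"
      "p mod P = (a - b) mod P"
      by (rule CirAut_term_nonzero_imp_mod_eq[OF supp])
    have "\<bar>a - b\<bar> \<le> 2 * r" using ab(1,2) by linarith
    then show False using far ab(4) by blast
  qed
qed

lemma CirAut_window_edge:
  fixes u :: "int \<Rightarrow> complex"
  assumes supp: "supported_in_window P r u"
    and "0 \<le> r" and "4 * r < P"
  shows "CirAut P u (2 * r) = u r * cnj (u (- r))"
proof -
  have "u n * cnj (u (n - 2 * r)) = 0" if n: "n \<in> {0..<P} - {r}" for n
  proof (rule ccontr)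
    assume "u n * cnj (u (n - 2 * r)) \<noteq> 0"
    then obtain a b where ab: "\<bar>a\<bar> \<le> r" "\<bar>b\<bar> \<le> r" "n mod P = a mod P"
      "(2 * r) mod P = (a - b) mod P"
      by (rule CirAut_term_nonzero_imp_mod_eq[OF supp])
    have "\<bar>2 * r - (a - b)\<bar> < P" using ab(1,2) assms(3) by linarith
    then have "2 * r = a - b" by (rule eq_if_mod_eq_abs_diff_less[OF ab(4)])
    then have "a = r" using ab(1,2) by linarith
    then have "n mod P = r mod P" using ab(3) by simp
    moreover have "n mod P = n" "r mod P = r" using n assms(2,3) by (simp_all add: mod_pos_pos_trivial)
    ultimately show False using n by simp
  qed
  then have "(\<Sum>n\<in>{0..<P} - {r}. u n * cnj (u (n - 2 * r))) = 0" by (intro sum.neutral ballI)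
  moreover have "r \<in> {0..<P}" using assms(2,3) by simp
  ultimately have "(\<Sum>n\<in>{0..<P}. u n * cnj (u (n - 2 * r))) = u r * cnj (u (r - 2 * r))"
    by (simp add: sum.remove)
  then show ?thesis unfolding CirAut_eq_sum by simp
qed

lemma symmetrization_window_support:
  fixes x :: "int \<Rightarrow> complex"
  assumes "periodic P x" and "\<forall>m. q < m \<and> m < P \<longrightarrow> x m = 0" and "0 < P"
  shows "supported_in_window P q (\<lambda>n. x n + revop x n)"
  unfolding supported_in_window_def
proof (intro allI impI)
  fix n
  have small: "k mod P \<le> q" if "x k \<noteq> 0" for k
    using that assms periodic_mod[OF assms(1), of k] by (metis not_le pos_mod_bound)
  assume "x n + revop x n \<noteq> 0"
  then consider "x n \<noteq> 0" | "x (- n) \<noteq> 0" unfolding revop_def by fastforce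
  then show "\<exists>a. \<bar>a\<bar> \<le> q \<and> n mod P = a mod P"
  proof cases
    case 1
    then show ?thesis using small[of n] assms(3) by (intro exI[of _ "n mod P"]) simp
  next
    case 2
    have "(- ((- n) mod P)) mod P = n mod P" by (simp add: mod_minus_eq)
    then show ?thesis using 2 small[of "- n"] assms(3) by (intro exI[of _ "- ((- n) mod P)"]) simp
  qed
qed

lemma periodic_vanishes_at_neg:
  fixes x :: "int \<Rightarrow> complex"
  assumes "periodic P x" and "\<forall>m. q < m \<and> m < P \<longrightarrow> x m = 0" and "0 < q" and "2 * q < P"
  shows "x (- q) = 0"
proof -
  have "(- q) mod P = P - q" using assms(3,4) by (simp add: zmod_zminus1_eq_if mod_pos_pos_trivial)
  then have "x (- q) = x (P - q)" using periodic_mod[OF assms(1), of "- q"] by simp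
  also have "\<dots> = 0" using assms(2-4) by simp
  finally show ?thesis .
qed

theorem lemma3:
  fixes M P q :: int and x :: "int \<Rightarrow> complex"
  assumes "M \<ge> 1" and "P = 4 * M - 3"
    and "periodic P x"
    and "x \<noteq> (\<lambda>_. 0)"
    and "\<forall>p. M \<le> p \<and> p \<le> 4 * M - 4 \<longrightarrow> x p = 0"
    and "0 \<le> q" and "q \<le> M - 1" and "x q \<noteq> 0"
    and "\<forall>p. q < p \<and> p \<le> M - 1 \<longrightarrow> x p = 0"
  shows "CirAut P (\<lambda>n. x n + revop x n) (2 * q) \<noteq> 0
    \<and> (\<forall>p. 2 * q < p \<and> p \<le> 2 * M - 2 \<longrightarrow> CirAut P (\<lambda>n. x n + revop x n) p = 0)"
proof -
  define y where "y = (\<lambda>n. x n + revop x n)"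
  have tail: "\<forall>m. q < m \<and> m < P \<longrightarrow> x m = 0"
  proof (intro allI impI)
    fix m
    assume "q < m \<and> m < P"
    then show "x m = 0" using assms(2,5,9) by (cases "m \<le> M - 1") auto
  qed
  have "0 < P" using assms(1,2) by simp
  then have supp: "supported_in_window P q y"
    unfolding y_def by (rule symmetrization_window_support[OF assms(3) tail])
  have "y (- q) = y q" by (simp add: y_def revop_def)
  moreover have "y q \<noteq> 0"
  proof (cases "q = 0")
    case False
    then have "x (- q) = 0" using periodic_vanishes_at_neg[OF assms(3) tail] assms(1,2,6,7) by simp
    then show ?thesis using assms(8) by (simp add: y_def revop_def)
  qed (use assms(8) in \<open>simp add: y_def revop_def\<close>)
  moreover have "CirAut P y (2 * q) = y q * cnj (y (- q))"
    using assms(2,6,7) by (intro CirAut_window_edge[OF supp]) auto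
  ultimately have "CirAut P y (2 * q) \<noteq> 0" by simp
  moreover have "CirAut P y p = 0" if p: "2 * q < p" "p \<le> 2 * M - 2" for p
  proof (rule CirAut_eq_0_if_window_support[OF supp], intro allI impI notI)
    fix d
    assume d: "\<bar>d\<bar> \<le> 2 * q" and "p mod P = d mod P"
    have "\<bar>p - d\<bar> < P" using p d assms(2,7) by linarith
    then have "p = d" by (rule eq_if_mod_eq_abs_diff_less[OF \<open>p mod P = d mod P\<close>])
    then show False using p d by linarith
  qed
  ultimately show ?thesis unfolding y_def by blast
qed

end
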